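(* Consider the risk-averse quantal response mean-field game described in the context, and assume the Lipschitz condition on $f_t$ and $r_t$ stated there. Then there exists a mean-field risk-averse quantal response equilibrium (MF-RQE), i.e. a pair $(\pi^*_{\mathrm{RQE}}, \mathcal{S}^* )$, with $\pi^*_{\mathrm{RQE}}\in\Pi$ and $\mathcal{S}^*$ a set of mean-field flows, such that $\pi^*_{\mathrm{RQE}}\in\mathcal{B}^{\mathrm{RQE}}_{\mathrm{opt}}(\mathcal{S}^* )$ and $\mathcal{B}^{\mathrm{RQE}}_{\mathrm{prop}}(\pi^*_{\mathrm{RQE}})=\mathcal{S}^*$.
   Context: Let $\mathcal{X},\mathcal{U}$ be finite nonempty sets and $T\ge 1$ an integer. For a finite set $E$, $\mathcal{P}(E)$ is the set of probability vectors on $E$ and $d_{TV}(\mu,\mu')=\frac12\|\mu-\mu'\|_1$. For each $t\in\{0,\dots,T-1\}$ there are a transition kernel $f_t(x'\mid x,u,\mu)$ (a probability distribution over $x'\in\mathcal{X}$ for each $x\in\mathcal{X},u\in\mathcal{U},\mu\in\mathcal{P}(\mathcal{X})$) and a reward $r_t:\mathcal{X}\times\mathcal{U}\times\mathcal{P}(\mathcal{X})\to[-R_{\max},R_{\max}]$. Lipschitz condition: there are $L_f,L_r>0$ with $\sum_{x'}|f_t(x'\mid x,u,\mu)-f_t(x'\mid x,u,\mu')|\le L_f d_{TV}(\mu,\mu')$ and $|r_t(x,u,\mu)-r_t(x,u,\mu')|\le L_r d_{TV}(\mu,\mu')$ for all $x,u,\mu,\mu',t$. A (Markov, identical for all agents)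 policy is $\pi=(\pi_0,\dots,\pi_{T-1})$ with $\pi_t(\cdot\mid x)\in\mathcal{P}(\mathcal{U})$ for all $x$; $\Pi_t$ is the set of time-$t$ decision rules and $\Pi$ the set of policies. Given $\pi$ and $\mu_0\in\mathcal{P}(\mathcal{X})$, the mean-field flow $\mu=(\mu_0,\dots,\mu_T)$ is defined by $\mu_{t+1}(x')=\sum_{x}\sum_{u}f_t(x'\mid x,u,\mu_t)\pi_t(u\mid x)\mu_t(x)$. For a flow $\mu$ and policy $\pi$: $Q^\pi_{\mu,T-1}(x,u)=r_{T-1}(x,u,\mu_{T-1})$, and for $t<T-1$, $Q^\pi_{\mu,t}(x,u)=r_t(x,u,\mu_t)+\sum_{x'}f_t(x'\mid x,u,\mu_t)V^\pi_{\mu,t+1}(x')$, where $V^\pi_{\mu,t}(x)=\sum_u\pi_t(u\mid x)Q^\pi_{\mu,t}(x,u)$. Risk and rationality data: a finite set $\mathbb{M}=\{\mu_0^1,\dots,\mu_0^K\}\subset\mathcal{P}(\mathcal{X})$ of initial distributions with probabilities $w_k=\Gamma^*(\mu_0^k)$, $\Gamma^*\in\mathcal{P}(\mathbb{M})$; a risk parameter $\tau>0$; a rationality parameter $\alpha>0$; and a regularizer $\nu:\mathcal{P}(\mathcal{U})\to\mathbb{R}$ that is strictly convex and continuous. A set of flows is $\mathcal{S}=\{\mu^1,\dots,\mu^K\}$ where $\mu^k$ is a mean-field flow with initial distribution $\mu_0^k$. For $t$, $x$, $\pi\in\Pi$ and $\mathcal{S}$, define $c_t^{\pi,\alpha}(x;\mathcal{S})=\frac1\tau\log\Big(\sum_{k=1}^K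 w_k\exp\big(-\tau\sum_{u}\pi_t(u\mid x)Q^\pi_{\mu^k,t}(x,u)\big)\Big)+\alpha\,\nu(\pi_t(\cdot\mid x))$. For $\pi'_t\in\Pi_t$, $(\pi'_t,\pi_{-t})$ denotes $\pi$ with its time-$t$ component replaced by $\pi'_t$. $\mathcal{B}^{\mathrm{RQE}}_{\mathrm{opt}}(\mathcal{S})$ is the set of $\pi\in\Pi$ such that for all $t\in\{0,\dots,T-1\}$ and $x\in\mathcal{X}$, $\pi_t(\cdot\mid x)$ minimizes $c_t^{(\pi'_t,\pi_{-t}),\alpha}(x;\mathcal{S})$ over $\pi'_t\in\Pi_t$. $\mathcal{B}^{\mathrm{RQE}}_{\mathrm{prop}}(\pi)$ is the set of flows $\{\mu^1,\dots,\mu^K\}$ where $\mu^k$ is generated by $\pi$ from $\mu_0^k$. *)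

theory Defs
  imports "HOL-Analysis.Analysis"
begin

definition pdist :: "('a::finite \<Rightarrow> real) set" where
  "pdist = {p. (\<forall>a. 0 \<le> p a) \<and> (\<Sum>a\<in>UNIV. p a) = 1}"

definition dTV :: "('a::finite \<Rightarrow> real) \<Rightarrow> ('a \<Rightarrow> real) \<Rightarrow> real" where
  "dTV \<mu> \<mu>' = (1/2) * (\<Sum>a\<in>UNIV. \<bar>\<mu> a - \<mu>' a\<bar>)"

text \<open>Kernels: f t x u \<mu> x' ;  rewards: r t x u \<mu> ;  policies: \<pi> t x u.\<close>

definition decision_rule :: "('x::finite \<Rightarrow> 'u::finite \<Rightarrow> real) \<Rightarrow> bool" where
  "decision_rule d \<longleftrightarrow> (\<forall>x. d x \<in> pdist)"

definition policy :: "nat \<Rightarrow> (nat \<Rightarrow> 'x::finite \<Rightarrow> 'u::finite \<Rightarrow> real) \<Rightarrow> bool" where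
  "policy T \<pi> \<longleftrightarrow> (\<forall>t<T. decision_rule (\<pi> t))"

primrec mf_flow :: "(nat \<Rightarrow> 'x::finite \<Rightarrow> 'u::finite \<Rightarrow> ('x \<Rightarrow> real) \<Rightarrow> 'x \<Rightarrow> real)
    \<Rightarrow> (nat \<Rightarrow> 'x \<Rightarrow> 'u \<Rightarrow> real) \<Rightarrow> ('x \<Rightarrow> real) \<Rightarrow> nat \<Rightarrow> 'x \<Rightarrow> real" where
  "mf_flow f \<pi> \<mu>0 0 = \<mu>0"
| "mf_flow f \<pi> \<mu>0 (Suc t) = (\<lambda>x'. \<Sum>x\<in>UNIV. \<Sum>u\<in>UNIV.
      f t x u (mf_flow f \<pi> \<mu>0 t) x' * \<pi> t x u * mf_flow f \<pi> \<mu>0 t x)"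

text \<open>Q-function computed backwards; the nat argument k is the number of remaining
  steps after t, so the Q-function at time t (horizon T) is Qk ... t (T - 1 - t).\<close>
primrec Qk :: "(nat \<Rightarrow> 'x::finite \<Rightarrow> 'u::finite \<Rightarrow> ('x \<Rightarrow> real) \<Rightarrow> 'x \<Rightarrow> real)
    \<Rightarrow> (nat \<Rightarrow> 'x \<Rightarrow> 'u \<Rightarrow> ('x \<Rightarrow> real) \<Rightarrow> real)
    \<Rightarrow> (nat \<Rightarrow> 'x \<Rightarrow> 'u \<Rightarrow> real) \<Rightarrow> (nat \<Rightarrow> 'x \<Rightarrow> real) \<Rightarrow> nat \<Rightarrow> nat \<Rightarrow> 'x \<Rightarrow> 'u \<Rightarrow> real" where
  "Qk f r \<pi> \<mu> t 0 x u = r t x u (\<mu> t)"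
| "Qk f r \<pi> \<mu> t (Suc k) x u = r t x u (\<mu> t) +
     (\<Sum>x'\<in>UNIV. f t x u (\<mu> t) x' * (\<Sum>u'\<in>UNIV. \<pi> (Suc t) x' u' * Qk f r \<pi> \<mu> (Suc t) k x' u'))"

definition Qfun where
  "Qfun T f r \<pi> \<mu> t x u = Qk f r \<pi> \<mu> t (T - 1 - t) x u"

text \<open>Risk-averse quantal cost c_t^{\<pi>,\<alpha>}(x; S); the set of flows S is indexed by k < K.\<close>
definition rqe_cost where
  "rqe_cost T f r K w \<tau> \<alpha> \<nu> t x \<pi> S =
     (1/\<tau>) * ln (\<Sum>k<K. w k * exp (- \<tau> * (\<Sum>u\<in>UNIV. \<pi> t x u * Qfun T f r \<pi> (S k) t x u)))
     + \<alpha> * \<nu> (\<pi> t x)"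

definition B_opt where
  "B_opt T f r K w \<tau> \<alpha> \<nu> S = {\<pi>. policy T \<pi> \<and>
     (\<forall>t<T. \<forall>x. \<forall>d. decision_rule d \<longrightarrow>
        rqe_cost T f r K w \<tau> \<alpha> \<nu> t x \<pi> S \<le> rqe_cost T f r K w \<tau> \<alpha> \<nu> t x (\<pi>(t := d)) S)}"

definition B_prop where
  "B_prop f K \<mu>0 \<pi> = (\<lambda>k. if k < K then mf_flow f \<pi> (\<mu>0 k) else undefined)"

end

theory Submission
  imports Defs
begin

(* An equilibrium is a fixed point of the best-response map pi |-> BR(pi), where BR(pi)_t(x) is the
   minimiser over the simplex of c_t(x) evaluated against the flows generated by pi; this is
   legitimate because Q_t involves only pi_{t+1}, ..., pi_{T-1}, so a fixed point is optimal
   against its own flows. The minimiser exists by compactness and is unique because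
   p |-> (1/tau) log (sum_k w_k exp (-tau <p, Q^k>)) is convex (Cauchy-Schwarz) and nu is strictly
   convex. The Lipschitz hypotheses make flows and Q-functions continuous in pi, and uniqueness
   of the minimiser upgrades this to continuity of BR. Brouwer's theorem on the cube indexed by
   {t < T} x X x U, composed with a continuous retraction onto the policies, gives the fixed point. *)

lemma tendsto_fun_iff:
  fixes X :: "'b \<Rightarrow> 'a \<Rightarrow> 'c::topological_space"
  shows "(X \<longlongrightarrow> l) F \<longleftrightarrow> (\<forall>i. ((\<lambda>k. X k i) \<longlongrightarrow> l i) F)"
proof -
  have "(X \<longlongrightarrow> l) F \<longleftrightarrow> limitin (product_topology (\<lambda>i. euclidean) UNIV) X l F"
    by (simp add: euclidean_product_topology)
  also have "\<dots> \<longleftrightarrow> (\<forall>i. ((\<lambda>k. X k i) \<longlongrightarrow> l i) F)"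
    by (simp add: limitin_componentwise)
  finally show ?thesis .
qed

lemma tendsto_by_dist_bound:
  fixes X Y e :: "nat \<Rightarrow> real"
  assumes "\<And>k. \<bar>X k - Y k\<bar> \<le> e k" and "e \<longlonglongrightarrow> 0" and "Y \<longlonglongrightarrow> L"
  shows "X \<longlonglongrightarrow> L"
proof -
  have "(\<lambda>k. X k - Y k) \<longlonglongrightarrow> 0"
    by (rule Lim_null_comparison[of _ e]) (use assms(1,2) in auto)
  then have "(\<lambda>k. Y k + (X k - Y k)) \<longlonglongrightarrow> L + 0"
    using assms(3) by (intro tendsto_add)
  then show ?thesis by simp
qed

lemma LIMSEQ_subsubseq:
  fixes X :: "nat \<Rightarrow> 'a::topological_space"
  assumes "\<And>r::nat \<Rightarrow> nat. strict_mono r \<Longrightarrow> \<exists>s::nat \<Rightarrow> nat. strict_mono s \<and> (\<lambda>m. X (r (s m))) \<longlonglongrightarrow> L"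
  shows "X \<longlonglongrightarrow> L"
proof (rule topological_tendstoI)
  fix S assume S: "open S" "L \<in> S"
  show "eventually (\<lambda>m. X m \<in> S) sequentially"
  proof (rule ccontr)
    assume "\<not> ?thesis"
    from not_eventually_sequentiallyD[OF this]
    obtain r :: "nat \<Rightarrow> nat" where r: "strict_mono r" "\<And>m. X (r m) \<notin> S"
      by blast
    obtain s where "(\<lambda>m. X (r (s m))) \<longlonglongrightarrow> L"
      using assms[OF r(1)] by blast
    then have "eventually (\<lambda>m. X (r (s m)) \<in> S) sequentially"
      using S by (rule topological_tendstoD)
    then show False
      using r(2) by simp
  qed
qed

lemma bounded_functions_convergent_subsequence:
  fixes X :: "nat \<Rightarrow> 'a \<Rightarrow> real"
  assumes "finite A" and "\<And>k a. a \<in> A \<Longrightarrow> \<bar>X k a\<bar> \<le> B"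
  shows "\<exists>h l. strict_mono h \<and> (\<forall>a\<in>A. (\<lambda>k. X (h k) a) \<longlonglongrightarrow> l a)"
  using assms
proof (induction A rule: finite_induct)
  case empty
  show ?case by (rule exI[of _ id]) (auto simp: strict_mono_def)
next
  case (insert a A)
  then obtain h l where h: "strict_mono h" "\<forall>b\<in>A. (\<lambda>k. X (h k) b) \<longlonglongrightarrow> l b"
    by blast
  have "bounded (range (\<lambda>k. X (h k) a))"
    using insert.prems by (intro boundedI[of _ B]) auto
  then obtain la s where s: "strict_mono s" "((\<lambda>k. X (h k) a) \<circ> s) \<longlonglongrightarrow> la"
    using bounded_imp_convergent_subsequence by blast
  have "(\<lambda>k. X (h (s k)) b) \<longlonglongrightarrow> (l(a := la)) b" if "b \<in> insert a A" for b
  proof (cases "b = a")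
    case True
    then show ?thesis using s by (simp add: o_def)
  next
    case False
    then have "((\<lambda>k. X (h k) b) \<circ> s) \<longlonglongrightarrow> l b"
      using that h s by (intro LIMSEQ_subseq_LIMSEQ) auto
    then show ?thesis using False by (simp add: o_def)
  qed
  moreover have "strict_mono (\<lambda>k. h (s k))"
    using h s by (simp add: strict_mono_compose)
  ultimately show ?case
    by (intro exI[of _ "\<lambda>k. h (s k)"] exI[of _ "l(a := la)"]) simp
qed

section \<open>Brouwer's fixed point theorem for cubes\<close>

text \<open>The library proves Brouwer's theorem only on Euclidean types, whose dimension is fixed by
  the type; here the dimension \<open>T * CARD('x) * CARD('u)\<close> is a term, so the argument via Kuhn's
  lemma is redone for cubes of functions.\<close>

definition cube :: "'i set \<Rightarrow> ('i \<Rightarrow> real) set" where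
  "cube I = {y. \<forall>i\<in>I. 0 \<le> y i \<and> y i \<le> 1}"

lemma kuhn_straddling_cell:
  fixes F :: "(nat \<Rightarrow> real) \<Rightarrow> nat \<Rightarrow> real" and p :: nat
  assumes p: "0 < p" and maps: "\<And>y. y \<in> cube {..<n} \<Longrightarrow> F y \<in> cube {..<n}"
  defines "grid \<equiv> \<lambda>v j. real (v j) / real p"
  obtains q v w where "\<And>j. j < n \<Longrightarrow> q j < p"
    and "\<And>i j. i < n \<Longrightarrow> j < n \<Longrightarrow> q j \<le> v i j \<and> v i j \<le> q j + 1 \<and> q j \<le> w i j \<and> w i j \<le> q j + 1"
    and "\<And>i. i < n \<Longrightarrow> F (grid (v i)) i \<le> grid (v i) i \<and> grid (w i) i \<le> F (grid (w i)) i"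
proof -
  \<comment> \<open>Label \<open>0\<close> where \<open>F\<close> does not decrease coordinate \<open>i\<close>, label \<open>1\<close> where it does not increase
    it; the boundary values are those Kuhn's lemma requires and are consistent with this.\<close>
  define label :: "(nat \<Rightarrow> nat) \<Rightarrow> nat \<Rightarrow> nat" where
    "label v i = (if v i = 0 then 0 else if v i = p then 1
        else if grid v i \<le> F (grid v) i then 0 else 1)" for v i
  have label_01: "label v i = 0 \<or> label v i = 1" for v i
    by (simp add: label_def)
  have F_grid: "F (grid v) \<in> cube {..<n}" if "\<forall>j<n. v j \<le> p" for v
    using that p by (intro maps) (auto simp: cube_def grid_def)
  have label_0: "grid v i \<le> F (grid v) i" if "\<forall>j<n. v j \<le> p" "i < n" "label v i = 0" for v i
    using F_grid[OF that(1)] that by (auto simp: label_def grid_def cube_def split: if_splits)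
  have label_1: "F (grid v) i \<le> grid v i" if "\<forall>j<n. v j \<le> p" "i < n" "label v i = 1" for v i
    using F_grid[OF that(1)] that by (auto simp: label_def grid_def cube_def split: if_splits)
  have "\<forall>v. (\<forall>i<n. v i \<le> p) \<longrightarrow> (\<forall>i<n. label v i = 0 \<or> label v i = 1)"
    using label_01 by blast
  moreover have "\<forall>v. (\<forall>i<n. v i \<le> p) \<longrightarrow> (\<forall>i<n. v i = 0 \<longrightarrow> label v i = 0)"
    "\<forall>v. (\<forall>i<n. v i \<le> p) \<longrightarrow> (\<forall>i<n. v i = p \<longrightarrow> label v i = 1)"
    using p by (simp_all add: label_def)
  ultimately obtain q where q: "\<forall>i<n. q i < p" and cell: "\<forall>i<n. \<exists>r s.
      (\<forall>j<n. q j \<le> r j \<and> r j \<le> q j + 1) \<and> (\<forall>j<n. q j \<le> s j \<and> s j \<le> q j + 1) \<and> label r i \<noteq> label s i"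
    by (rule kuhn_lemma[OF p])
  define straddle where "straddle i v w \<longleftrightarrow> (\<forall>j<n. q j \<le> v j \<and> v j \<le> q j + 1 \<and> q j \<le> w j \<and> w j \<le> q j + 1) \<and>
      F (grid v) i \<le> grid v i \<and> grid w i \<le> F (grid w) i" for i v w
  have "\<exists>v w. straddle i v w" if i: "i < n" for i
  proof -
    obtain r s where rs: "\<forall>j<n. q j \<le> r j \<and> r j \<le> q j + 1" "\<forall>j<n. q j \<le> s j \<and> s j \<le> q j + 1"
      and "label r i \<noteq> label s i"
      using cell i by blast
    have "r j \<le> p \<and> s j \<le> p" if "j < n" for j
      using rs[rule_format, OF that] q[rule_format, OF that] by simp
    then have bounded: "\<forall>j<n. r j \<le> p" "\<forall>j<n. s j \<le> p"
      by simp_all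
    have "label r i = 1 \<and> label s i = 0 \<or> label s i = 1 \<and> label r i = 0"
      using \<open>label r i \<noteq> label s i\<close> label_01[of r i] label_01[of s i] by auto
    then show ?thesis
    proof
      assume "label r i = 1 \<and> label s i = 0"
      then show ?thesis
        using rs label_1[OF bounded(1) i] label_0[OF bounded(2) i]
        by (intro exI[of _ r] exI[of _ s]) (simp add: straddle_def)
    next
      assume "label s i = 1 \<and> label r i = 0"
      then show ?thesis
        using rs label_1[OF bounded(2) i] label_0[OF bounded(1) i]
        by (intro exI[of _ s] exI[of _ r]) (simp add: straddle_def)
    qed
  qed
  then obtain v w where "\<And>i. i < n \<Longrightarrow> straddle i (v i) (w i)"
    by metis
  then show ?thesis
    by (intro that[of q v w]) (use q in \<open>simp_all add: straddle_def\<close>)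
qed

lemma cube_approximate_fixed_points:
  fixes F :: "(nat \<Rightarrow> real) \<Rightarrow> nat \<Rightarrow> real" and p :: nat
  assumes p: "0 < p" and maps: "\<And>y. y \<in> cube {..<n} \<Longrightarrow> F y \<in> cube {..<n}"
  shows "\<exists>z a b. z \<in> cube {..<n} \<and> (\<forall>i<n. a i \<in> cube {..<n} \<and> b i \<in> cube {..<n} \<and>
    (\<forall>j<n. \<bar>a i j - z j\<bar> \<le> 1 / p \<and> \<bar>b i j - z j\<bar> \<le> 1 / p) \<and>
    F (a i) i \<le> a i i \<and> b i i \<le> F (b i) i)"
proof -
  define grid :: "(nat \<Rightarrow> nat) \<Rightarrow> nat \<Rightarrow> real" where "grid = (\<lambda>v j. real (v j) / real p)"
  obtain q v w where q: "\<And>j. j < n \<Longrightarrow> q j < p"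
    and cell: "\<And>i j. i < n \<Longrightarrow> j < n \<Longrightarrow> q j \<le> v i j \<and> v i j \<le> q j + 1 \<and> q j \<le> w i j \<and> w i j \<le> q j + 1"
    and straddle: "\<And>i. i < n \<Longrightarrow> F (grid (v i)) i \<le> grid (v i) i \<and> grid (w i) i \<le> F (grid (w i)) i"
    using kuhn_straddling_cell[where F = F and n = n, OF p maps] unfolding grid_def by blast
  have vertex: "grid u \<in> cube {..<n} \<and> (\<forall>j<n. \<bar>grid u j - grid q j\<bar> \<le> 1 / p)"
    if "\<And>j. j < n \<Longrightarrow> q j \<le> u j \<and> u j \<le> q j + 1" for u
  proof -
    have "0 \<le> real (u j) - real (q j) \<and> real (u j) - real (q j) \<le> 1 \<and> u j \<le> p" if "j < n" for j
      using that q[OF that] \<open>\<And>j. j < n \<Longrightarrow> q j \<le> u j \<and> u j \<le> q j + 1\<close>[OF that] by linarith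
    then show ?thesis
      using p by (auto simp: grid_def cube_def diff_divide_distrib[symmetric] divide_right_mono)
  qed
  have "grid q \<in> cube {..<n}"
    using q p by (auto simp: grid_def cube_def less_imp_le)
  moreover have "grid (v i) \<in> cube {..<n} \<and> grid (w i) \<in> cube {..<n} \<and>
      (\<forall>j<n. \<bar>grid (v i) j - grid q j\<bar> \<le> 1 / p \<and> \<bar>grid (w i) j - grid q j\<bar> \<le> 1 / p)" if "i < n" for i
    using vertex[of "v i"] vertex[of "w i"] cell[OF that] by blast
  ultimately show ?thesis
    using straddle by (intro exI[of _ "grid q"] exI[of _ "\<lambda>i. grid (v i)"] exI[of _ "\<lambda>i. grid (w i)"]) simp
qed

lemma brouwer_cube_nat:
  fixes F :: "(nat \<Rightarrow> real) \<Rightarrow> nat \<Rightarrow> real"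
  assumes maps: "\<And>y. y \<in> cube {..<n} \<Longrightarrow> F y \<in> cube {..<n}"
    and cont: "\<And>Y z i. (\<And>k. Y k \<in> cube {..<n}) \<Longrightarrow> z \<in> cube {..<n} \<Longrightarrow>
        (\<And>j. j < n \<Longrightarrow> (\<lambda>k. Y k j) \<longlonglongrightarrow> z j) \<Longrightarrow> i < n \<Longrightarrow> (\<lambda>k. F (Y k) i) \<longlonglongrightarrow> F z i"
  shows "\<exists>z\<in>cube {..<n}. \<forall>i<n. F z i = z i"
proof -
  define C where "C = cube {..<n}"
  define approx where "approx m z a b \<longleftrightarrow> z \<in> C \<and> (\<forall>i<n. a i \<in> C \<and> b i \<in> C \<and>
      (\<forall>j<n. \<bar>a i j - z j\<bar> \<le> 1 / real (Suc m) \<and> \<bar>b i j - z j\<bar> \<le> 1 / real (Suc m)) \<and>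
      F (a i) i \<le> a i i \<and> b i i \<le> F (b i) i)" for m z a b
  have "\<exists>z a b. approx m z a b" for m
    using cube_approximate_fixed_points[OF zero_less_Suc maps] unfolding approx_def C_def .
  then obtain z a b where approx: "\<And>m. approx m (z m) (a m) (b m)"
    by metis
  then have z: "z m \<in> C" for m
    by (simp add: approx_def)
  obtain h l where h: "strict_mono h" and zl: "\<And>j. j < n \<Longrightarrow> (\<lambda>k. z (h k) j) \<longlonglongrightarrow> l j"
    using bounded_functions_convergent_subsequence[of "{..<n}" z 1] z by (fastforce simp: C_def cube_def)
  have l: "l \<in> C"
  proof -
    have "0 \<le> l j \<and> l j \<le> 1" if "j < n" for j
      using z that by (intro conjI LIMSEQ_le_const[OF zl] LIMSEQ_le_const2[OF zl]) (auto simp: C_def cube_def)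
    then show ?thesis by (simp add: C_def cube_def)
  qed
  have mesh: "(\<lambda>k. 1 / real (Suc (h k))) \<longlonglongrightarrow> 0"
    using LIMSEQ_subseq_LIMSEQ[OF LIMSEQ_inverse_real_of_nat h] by (simp add: o_def inverse_eq_divide)
  have near: "(\<lambda>k. Y (h k) j) \<longlonglongrightarrow> l j"
    if "\<And>m. \<bar>Y m j - z m j\<bar> \<le> 1 / real (Suc m)" and "j < n" for Y j
    using that by (intro tendsto_by_dist_bound[OF _ mesh zl]) auto
  have "F l i = l i" if i: "i < n" for i
  proof -
    have a: "a m i \<in> C" "F (a m i) i - a m i i \<le> 0" and b: "b m i \<in> C" "0 \<le> F (b m i) i - b m i i" for m
      using approx[of m] i by (auto simp: approx_def)
    have "(\<lambda>k. a (h k) i j) \<longlonglongrightarrow> l j" "(\<lambda>k. b (h k) i j) \<longlonglongrightarrow> l j" if "j < n" for j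
      using approx i that by (intro near; force simp: approx_def)+
    then have lim_a: "(\<lambda>k. F (a (h k) i) i - a (h k) i i) \<longlonglongrightarrow> F l i - l i"
      and lim_b: "(\<lambda>k. F (b (h k) i) i - b (h k) i i) \<longlonglongrightarrow> F l i - l i"
      using a(1) b(1) l i unfolding C_def by (intro tendsto_diff cont; blast)+
    have "F l i - l i \<le> 0"
      by (rule LIMSEQ_le_const2[OF lim_a]) (use a(2) in simp)
    moreover have "0 \<le> F l i - l i"
      by (rule LIMSEQ_le_const[OF lim_b]) (use b(2) in simp)
    ultimately show ?thesis by simp
  qed
  then show ?thesis using l unfolding C_def by blast
qed

lemma brouwer_cube:
  fixes F :: "('i \<Rightarrow> real) \<Rightarrow> 'i \<Rightarrow> real"
  assumes I: "finite I"
    and maps: "\<And>y. y \<in> cube I \<Longrightarrow> F y \<in> cube I"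
    and cont: "\<And>Y z i. (\<And>k. Y k \<in> cube I) \<Longrightarrow> z \<in> cube I \<Longrightarrow>
        (\<And>j. j \<in> I \<Longrightarrow> (\<lambda>k. Y k j) \<longlonglongrightarrow> z j) \<Longrightarrow> i \<in> I \<Longrightarrow> (\<lambda>k. F (Y k) i) \<longlonglongrightarrow> F z i"
  shows "\<exists>z\<in>cube I. \<forall>i\<in>I. F z i = z i"
proof -
  define n where "n = card I"
  obtain e where e: "bij_betw e {..<n} I"
    using ex_bij_betw_nat_finite[OF I] by (auto simp: n_def atLeast0LessThan)
  define e' where "e' = inv_into {..<n} e"
  have e': "e' i < n" "e (e' i) = i" if "i \<in> I" for i
    using that e bij_betw_inv_into_right[OF e] bij_betwE[OF bij_betw_inv_into[OF e]]
    by (auto simp: e'_def)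
  have e_in: "e j \<in> I" if "j < n" for j
    using that e by (auto dest: bij_betwE)
  define pull :: "(nat \<Rightarrow> real) \<Rightarrow> 'i \<Rightarrow> real" where "pull y i = y (e' i)" for y i
  define G where "G y j = F (pull y) (e j)" for y j
  have pull_cube: "pull y \<in> cube I" if "y \<in> cube {..<n}" for y
    using that e'(1) by (auto simp: cube_def pull_def)
  have "\<exists>z\<in>cube {..<n}. \<forall>j<n. G z j = z j"
  proof (rule brouwer_cube_nat)
    show "G y \<in> cube {..<n}" if "y \<in> cube {..<n}" for y
      using maps[OF pull_cube[OF that]] e_in by (auto simp: cube_def G_def)
    show "(\<lambda>k. G (Y k) j) \<longlonglongrightarrow> G z j"
      if "\<And>k. Y k \<in> cube {..<n}" "z \<in> cube {..<n}" "\<And>j. j < n \<Longrightarrow> (\<lambda>k. Y k j) \<longlonglongrightarrow> z j" "j < n"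
      for Y z j
      unfolding G_def using that e'(1) e_in by (intro cont pull_cube) (auto simp: pull_def)
  qed
  then obtain z where z: "z \<in> cube {..<n}" "\<And>j. j < n \<Longrightarrow> G z j = z j"
    by blast
  have "F (pull z) i = pull z i" if "i \<in> I" for i
    using z(2)[OF e'(1)[OF that]] e'(2)[OF that] by (simp add: G_def pull_def)
  then show ?thesis
    using pull_cube[OF z(1)] by blast
qed

lemma pdist_nonneg: "p \<in> pdist \<Longrightarrow> 0 \<le> p u"
  by (simp add: pdist_def)

lemma pdist_sum: "p \<in> pdist \<Longrightarrow> (\<Sum>u\<in>UNIV. p u) = 1"
  by (simp add: pdist_def)

lemma pdist_le_1:
  assumes "p \<in> pdist"
  shows "p u \<le> 1"
proof -
  have "p u \<le> (\<Sum>v\<in>UNIV. p v)"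
    by (rule member_le_sum) (auto simp: pdist_nonneg[OF assms])
  then show ?thesis using pdist_sum[OF assms] by simp
qed

lemma pdist_nonempty: "pdist \<noteq> {}"
proof -
  have "(\<lambda>u. if u = undefined then 1 else 0 :: real) \<in> pdist"
    by (simp add: pdist_def)
  then show ?thesis by blast
qed

lemma compact_pdist: "compact (pdist :: ('u::finite \<Rightarrow> real) set)"
proof -
  have "compactin (product_topology (\<lambda>_. euclidean) UNIV) (PiE (UNIV::'u set) (\<lambda>_. {0::real..1}))"
    by (simp add: compactin_PiE)
  then have box: "compact (PiE (UNIV::'u set) (\<lambda>_. {0::real..1}))"
    by (simp add: euclidean_product_topology)
  have "continuous_on UNIV (\<lambda>p::'u \<Rightarrow> real. \<Sum>u\<in>UNIV. p u)"
    by (intro continuous_on_sum continuous_on_product_coordinates)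
  then have mass: "closed {p::'u \<Rightarrow> real. (\<Sum>u\<in>UNIV. p u) = 1}"
    by (rule closed_Collect_eq[OF _ continuous_on_const])
  have "pdist = PiE (UNIV::'u set) (\<lambda>_. {0::real..1}) \<inter> {p. (\<Sum>u\<in>UNIV. p u) = 1}"
    by (auto simp: PiE_UNIV_domain Pi_iff pdist_le_1 pdist_def)
  then show ?thesis
    using compact_Int_closed[OF box mass] by simp
qed

lemma pdist_limit:
  assumes "\<And>m. P m \<in> pdist" and "\<And>u. (\<lambda>m. P m u) \<longlonglongrightarrow> p u"
  shows "p \<in> pdist"
proof -
  have "0 \<le> p u" for u
    by (rule LIMSEQ_le_const[OF assms(2)]) (use assms(1) pdist_nonneg in blast)
  moreover have "(\<lambda>m. \<Sum>u\<in>UNIV. P m u) \<longlonglongrightarrow> (\<Sum>u\<in>UNIV. p u)"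
    by (intro tendsto_sum assms(2))
  then have "(\<Sum>u\<in>UNIV. p u) = 1"
    using assms(1) by (simp add: pdist_sum LIMSEQ_const_iff)
  ultimately show ?thesis by (simp add: pdist_def)
qed

lemma dTV_tendsto_0:
  assumes "\<And>a. (\<lambda>m. M m a) \<longlonglongrightarrow> \<mu> a"
  shows "(\<lambda>m. dTV (M m) \<mu>) \<longlonglongrightarrow> 0"
proof -
  have "(\<lambda>m. 1/2 * (\<Sum>a\<in>UNIV. \<bar>M m a - \<mu> a\<bar>)) \<longlonglongrightarrow> 1/2 * (\<Sum>a\<in>UNIV. \<bar>\<mu> a - \<mu> a\<bar>)"
    by (intro tendsto_intros assms)
  then show ?thesis by (simp add: dTV_def)
qed

text \<open>A retraction of the nonnegative vectors onto the simplex, continuous on them.\<close>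

definition to_pdist :: "('u::finite \<Rightarrow> real) \<Rightarrow> 'u \<Rightarrow> real" where
  "to_pdist v = (let s = (\<Sum>u\<in>UNIV. v u); c = max 0 (1 - s) in (\<lambda>u. (v u + c / CARD('u)) / (s + c)))"

lemma to_pdist_in_pdist:
  fixes v :: "'u::finite \<Rightarrow> real"
  assumes "\<And>u. 0 \<le> v u"
  shows "to_pdist v \<in> pdist"
proof -
  define s where "s = (\<Sum>u\<in>UNIV. v u)"
  define c where "c = max 0 (1 - s)"
  have pos: "1 \<le> s + c" "0 \<le> c"
    by (simp_all add: c_def)
  have "(\<Sum>u\<in>UNIV. v u + c / CARD('u)) = s + c"
    by (simp add: sum.distrib s_def)
  then have "(\<Sum>u\<in>UNIV. (v u + c / CARD('u)) / (s + c)) = 1"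
    using pos by (simp flip: sum_divide_distrib)
  moreover have "0 \<le> (v u + c / CARD('u)) / (s + c)" for u
    using assms[of u] pos by simp
  ultimately show ?thesis
    by (simp add: pdist_def to_pdist_def Let_def flip: s_def c_def)
qed

lemma to_pdist_id: "p \<in> pdist \<Longrightarrow> to_pdist p = p"
  by (simp add: to_pdist_def pdist_sum)

lemma to_pdist_tendsto:
  assumes "\<And>u. (\<lambda>m. V m u) \<longlonglongrightarrow> v u"
  shows "(\<lambda>m. to_pdist (V m) u) \<longlonglongrightarrow> to_pdist v u"
proof -
  have "(\<Sum>u\<in>UNIV. v u) + max 0 (1 - (\<Sum>u\<in>UNIV. v u)) \<noteq> 0"
    by linarith
  then show ?thesis
    unfolding to_pdist_def Let_def by (intro tendsto_intros assms) simp
qed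

section \<open>The risk-averse quantal response\<close>

locale risk_averse_qr =
  fixes K :: nat and w :: "nat \<Rightarrow> real" and \<tau> \<alpha> :: real
    and \<nu> :: "('u::finite \<Rightarrow> real) \<Rightarrow> real"
  assumes w_nonneg: "\<And>k. k < K \<Longrightarrow> w k \<ge> 0"
    and w_sum: "(\<Sum>k<K. w k) = 1"
    and tau: "\<tau> > 0" and alpha: "\<alpha> > 0"
    and nu_strict_convex: "\<And>p q a. p \<in> pdist \<Longrightarrow> q \<in> pdist \<Longrightarrow> p \<noteq> q \<Longrightarrow> 0 < a \<Longrightarrow> a < 1 \<Longrightarrow>
        \<nu> (\<lambda>u. a * p u + (1 - a) * q u) < a * \<nu> p + (1 - a) * \<nu> q"
    and nu_cont: "continuous_on pdist \<nu>"
begin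

text \<open>Here \<open>c k\<close> is the action-value vector of scenario \<open>k\<close>; \<open>rqe_cost\<close> is \<open>qr_cost\<close> applied
  to the Q-functions of the \<open>K\<close> flows.\<close>

definition exp_moment :: "(nat \<Rightarrow> 'u \<Rightarrow> real) \<Rightarrow> ('u \<Rightarrow> real) \<Rightarrow> real" where
  "exp_moment c p = (\<Sum>k<K. w k * exp (- \<tau> * (\<Sum>u\<in>UNIV. p u * c k u)))"

definition qr_cost :: "(nat \<Rightarrow> 'u \<Rightarrow> real) \<Rightarrow> ('u \<Rightarrow> real) \<Rightarrow> real" where
  "qr_cost c p = 1 / \<tau> * ln (exp_moment c p) + \<alpha> * \<nu> p"

lemma exp_moment_pos: "0 < exp_moment c p"
proof -
  have "\<exists>k<K. 0 < w k"
  proof (rule ccontr)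
    assume none: "\<not> (\<exists>k<K. 0 < w k)"
    have "(\<Sum>k<K. w k) \<le> 0"
      by (rule sum_nonpos) (metis none not_less lessThan_iff)
    then show False using w_sum by simp
  qed
  then show ?thesis
    unfolding exp_moment_def using w_nonneg by (auto intro: sum_pos2)
qed

lemma qr_cost_continuous_on: "continuous_on pdist (qr_cost c)"
proof -
  have "continuous_on pdist (exp_moment c)"
    unfolding exp_moment_def
    by (intro continuous_intros) (auto intro: continuous_on_subset[OF continuous_on_product_coordinates])
  then have "continuous_on pdist (\<lambda>p. ln (exp_moment c p))"
    by (rule continuous_on_ln) (metis exp_moment_pos less_irrefl)
  then show ?thesis
    unfolding qr_cost_def by (intro continuous_on_add continuous_on_mult continuous_on_const nu_cont)
qed

text \<open>Midpoint log-convexity of the exponential moment, by Cauchy--Schwarz.\<close>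

lemma ln_exp_moment_midpoint:
  shows "ln (exp_moment c (\<lambda>u. 1/2 * p u + (1 - 1/2) * q u))
    \<le> 1/2 * ln (exp_moment c p) + 1/2 * ln (exp_moment c q)"
proof -
  define A where "A k = - \<tau> * (\<Sum>u\<in>UNIV. p u * c k u)" for k
  define B where "B k = - \<tau> * (\<Sum>u\<in>UNIV. q u * c k u)" for k
  define a where "a k = sqrt (w k) * exp (A k / 2)" for k
  define b where "b k = sqrt (w k) * exp (B k / 2)" for k
  have square: "(sqrt (w k) * exp (x / 2))\<^sup>2 = w k * exp x" if "k < K" for k x
    using w_nonneg[OF that] by (simp add: power_mult_distrib flip: exp_double)
  have "- \<tau> * (\<Sum>u\<in>UNIV. (1/2 * p u + (1 - 1/2) * q u) * c k u) = A k / 2 + B k / 2" for k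
    by (simp add: A_def B_def algebra_simps sum.distrib sum_distrib_left sum_divide_distrib)
  then have mid: "exp_moment c (\<lambda>u. 1/2 * p u + (1 - 1/2) * q u) = (\<Sum>k<K. a k * b k)"
    unfolding exp_moment_def a_def b_def
    by (intro sum.cong refl) (use w_nonneg in \<open>simp add: exp_add real_sqrt_mult[symmetric]\<close>)
  have "exp_moment c p = (\<Sum>k<K. (a k)\<^sup>2)" "exp_moment c q = (\<Sum>k<K. (b k)\<^sup>2)"
    unfolding exp_moment_def A_def[symmetric] B_def[symmetric]
    by (auto intro!: sum.cong simp: a_def b_def square)
  then have "(exp_moment c (\<lambda>u. 1/2 * p u + (1 - 1/2) * q u))\<^sup>2 \<le> exp_moment c p * exp_moment c q"
    unfolding mid by (simp add: Cauchy_Schwarz_ineq_sum)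
  moreover have pos: "0 < exp_moment c (\<lambda>u. 1/2 * p u + (1 - 1/2) * q u)" "0 < exp_moment c p" "0 < exp_moment c q"
    by (rule exp_moment_pos)+
  ultimately have "ln ((exp_moment c (\<lambda>u. 1/2 * p u + (1 - 1/2) * q u))\<^sup>2) \<le> ln (exp_moment c p * exp_moment c q)"
    by (subst ln_le_cancel_iff) auto
  then have "2 * ln (exp_moment c (\<lambda>u. 1/2 * p u + (1 - 1/2) * q u))
      \<le> ln (exp_moment c p) + ln (exp_moment c q)"
    using pos by (simp add: ln_realpow ln_mult)
  then show ?thesis by simp
qed

lemma qr_cost_minimizer_unique:
  assumes p: "p \<in> pdist" and q: "q \<in> pdist"
    and p_min: "\<forall>p'\<in>pdist. qr_cost c p \<le> qr_cost c p'"
    and q_min: "\<forall>p'\<in>pdist. qr_cost c q \<le> qr_cost c p'"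
  shows "p = q"
proof (rule ccontr)
  assume "p \<noteq> q"
  define m where "m = (\<lambda>u. 1/2 * p u + (1 - 1/2) * q u)"
  have "m \<in> pdist"
    using p q by (auto simp: pdist_def m_def sum.distrib simp flip: sum_divide_distrib)
  have "\<alpha> * \<nu> m < \<alpha> * (1/2 * \<nu> p + (1 - 1/2) * \<nu> q)"
    unfolding m_def using \<open>p \<noteq> q\<close> alpha by (intro mult_strict_left_mono nu_strict_convex p q) auto
  moreover have "1 / \<tau> * ln (exp_moment c m) \<le> 1 / \<tau> * (1/2 * ln (exp_moment c p) + 1/2 * ln (exp_moment c q))"
    unfolding m_def using tau by (intro mult_left_mono ln_exp_moment_midpoint) auto
  ultimately have "qr_cost c m < 1/2 * qr_cost c p + 1/2 * qr_cost c q"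
    unfolding qr_cost_def by (simp add: algebra_simps)
  moreover have "qr_cost c p \<le> qr_cost c m" "qr_cost c q \<le> qr_cost c m"
    using p_min q_min \<open>m \<in> pdist\<close> by auto
  ultimately show False by simp
qed

definition quantal_response :: "(nat \<Rightarrow> 'u \<Rightarrow> real) \<Rightarrow> 'u \<Rightarrow> real" where
  "quantal_response c = (SOME p. p \<in> pdist \<and> (\<forall>q\<in>pdist. qr_cost c p \<le> qr_cost c q))"

lemma quantal_response:
  shows quantal_response_in_pdist: "quantal_response c \<in> pdist"
    and quantal_response_minimal: "q \<in> pdist \<Longrightarrow> qr_cost c (quantal_response c) \<le> qr_cost c q"
proof -
  have "\<exists>p\<in>pdist. \<forall>q\<in>pdist. qr_cost c p \<le> qr_cost c q"
    by (rule continuous_attains_inf[OF compact_pdist pdist_nonempty qr_cost_continuous_on])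
  then have "\<exists>p. p \<in> pdist \<and> (\<forall>q\<in>pdist. qr_cost c p \<le> qr_cost c q)"
    by blast
  then have "quantal_response c \<in> pdist \<and> (\<forall>q\<in>pdist. qr_cost c (quantal_response c) \<le> qr_cost c q)"
    unfolding quantal_response_def by (rule someI_ex)
  then show "quantal_response c \<in> pdist" "q \<in> pdist \<Longrightarrow> qr_cost c (quantal_response c) \<le> qr_cost c q"
    by auto
qed

lemma qr_cost_tendsto:
  assumes "\<And>k u. k < K \<Longrightarrow> (\<lambda>m. C m k u) \<longlonglongrightarrow> c k u"
    and "\<And>m. P m \<in> pdist" and "p \<in> pdist" and "\<And>u. (\<lambda>m. P m u) \<longlonglongrightarrow> p u"
  shows "(\<lambda>m. qr_cost (C m) (P m)) \<longlonglongrightarrow> qr_cost c p"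
proof -
  have "(\<lambda>m. exp_moment (C m) (P m)) \<longlonglongrightarrow> exp_moment c p"
    unfolding exp_moment_def by (intro tendsto_intros assms(1,4)) auto
  then have ln_lim: "(\<lambda>m. ln (exp_moment (C m) (P m))) \<longlonglongrightarrow> ln (exp_moment c p)"
    by (rule tendsto_ln) (metis exp_moment_pos less_irrefl)
  have "P \<longlonglongrightarrow> p"
    using assms(4) by (simp add: tendsto_fun_iff)
  then have nu_lim: "(\<lambda>m. \<nu> (P m)) \<longlonglongrightarrow> \<nu> p"
    using assms(2,3) by (intro continuous_on_tendsto_compose[OF nu_cont]) auto
  show ?thesis
    unfolding qr_cost_def by (intro tendsto_add tendsto_mult tendsto_const ln_lim nu_lim)
qed

text \<open>The limit of a convergent subsequence of quantal responses is again a minimiser, hence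
  by uniqueness the quantal response of the limit; compactness then gives convergence.\<close>

lemma quantal_response_tendsto:
  assumes C: "\<And>k u. k < K \<Longrightarrow> (\<lambda>m. C m k u) \<longlonglongrightarrow> c k u"
  shows "(\<lambda>m. quantal_response (C m) u) \<longlonglongrightarrow> quantal_response c u"
proof (rule LIMSEQ_subsubseq)
  fix r :: "nat \<Rightarrow> nat" assume r: "strict_mono r"
  obtain s p where s: "strict_mono s"
    and lim: "\<forall>u\<in>UNIV. (\<lambda>m. quantal_response (C (r (s m))) u) \<longlonglongrightarrow> p u"
    using bounded_functions_convergent_subsequence[of UNIV "\<lambda>m. quantal_response (C (r m))" 1]
      quantal_response_in_pdist pdist_nonneg pdist_le_1 by fastforce
  have p: "p \<in> pdist"
    by (rule pdist_limit[of "\<lambda>m. quantal_response (C (r (s m)))"]) (use quantal_response_in_pdist lim in auto)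
  have Crs: "(\<lambda>m. C (r (s m)) k u) \<longlonglongrightarrow> c k u" if "k < K" for k u
    using LIMSEQ_subseq_LIMSEQ[OF C[OF that] strict_mono_o[OF r s]] by (simp add: o_def)
  have "qr_cost c p \<le> qr_cost c q" if q: "q \<in> pdist" for q
  proof (rule LIMSEQ_le)
    show "(\<lambda>m. qr_cost (C (r (s m))) (quantal_response (C (r (s m))))) \<longlonglongrightarrow> qr_cost c p"
      using lim by (intro qr_cost_tendsto[OF Crs quantal_response_in_pdist p]) auto
    show "(\<lambda>m. qr_cost (C (r (s m))) q) \<longlonglongrightarrow> qr_cost c q"
      by (intro qr_cost_tendsto[OF Crs q q]) auto
    show "\<exists>N. \<forall>m\<ge>N. qr_cost (C (r (s m))) (quantal_response (C (r (s m)))) \<le> qr_cost (C (r (s m))) q"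
      using quantal_response_minimal[OF q] by blast
  qed
  then have "p = quantal_response c"
    using quantal_response_minimal by (intro qr_cost_minimizer_unique[OF p quantal_response_in_pdist]) auto
  then show "\<exists>s. strict_mono s \<and> (\<lambda>m. quantal_response (C (r (s m))) u) \<longlonglongrightarrow> quantal_response c u"
    using s lim by blast
qed

end

section \<open>Mean-field flows and Q-functions\<close>

lemma policy_pdist: "policy T \<pi> \<Longrightarrow> t < T \<Longrightarrow> \<pi> t x \<in> pdist"
  by (simp add: policy_def decision_rule_def)

lemma Qk_cong_future:
  assumes "\<And>s. t < s \<Longrightarrow> \<pi> s = \<pi>' s"
  shows "Qk f r \<pi> \<mu> t j x u = Qk f r \<pi>' \<mu> t j x u"
  using assms
proof (induction j arbitrary: t x u)
  case 0
  then show ?case by simp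
next
  case (Suc j)
  have "Qk f r \<pi> \<mu> (Suc t) j x' u' = Qk f r \<pi>' \<mu> (Suc t) j x' u'" for x' u'
    by (rule Suc.IH) (use Suc.prems in auto)
  moreover have "\<pi> (Suc t) = \<pi>' (Suc t)"
    using Suc.prems by simp
  ultimately show ?case by simp
qed

locale lipschitz_mean_field =
  fixes T :: nat and f :: "nat \<Rightarrow> 'x::finite \<Rightarrow> 'u::finite \<Rightarrow> ('x \<Rightarrow> real) \<Rightarrow> 'x \<Rightarrow> real"
    and r :: "nat \<Rightarrow> 'x \<Rightarrow> 'u \<Rightarrow> ('x \<Rightarrow> real) \<Rightarrow> real" and Lf Lr :: real
  assumes f_dist: "\<And>t x u \<mu>. t < T \<Longrightarrow> \<mu> \<in> pdist \<Longrightarrow> f t x u \<mu> \<in> pdist"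
    and f_Lip: "\<And>t x u \<mu> \<mu>'. t < T \<Longrightarrow> \<mu> \<in> pdist \<Longrightarrow> \<mu>' \<in> pdist \<Longrightarrow>
        (\<Sum>x'\<in>UNIV. \<bar>f t x u \<mu> x' - f t x u \<mu>' x'\<bar>) \<le> Lf * dTV \<mu> \<mu>'"
    and r_Lip: "\<And>t x u \<mu> \<mu>'. t < T \<Longrightarrow> \<mu> \<in> pdist \<Longrightarrow> \<mu>' \<in> pdist \<Longrightarrow>
        \<bar>r t x u \<mu> - r t x u \<mu>'\<bar> \<le> Lr * dTV \<mu> \<mu>'"
begin

lemma mf_flow_pdist:
  assumes \<pi>: "policy T \<pi>" and \<mu>0: "\<mu>0 \<in> pdist"
  shows "t \<le> T \<Longrightarrow> mf_flow f \<pi> \<mu>0 t \<in> pdist"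
proof (induction t)
  case 0
  then show ?case using \<mu>0 by simp
next
  case (Suc t)
  then have t: "t < T" by simp
  define \<mu> where "\<mu> = mf_flow f \<pi> \<mu>0 t"
  have \<mu>: "\<mu> \<in> pdist"
    using Suc t unfolding \<mu>_def by simp
  have f: "f t x u \<mu> \<in> pdist" for x u
    using f_dist[OF t \<mu>] .
  have \<pi>t: "\<pi> t x \<in> pdist" for x
    using policy_pdist[OF \<pi> t] .
  have nonneg: "0 \<le> mf_flow f \<pi> \<mu>0 (Suc t) x'" for x'
    unfolding mf_flow.simps \<mu>_def[symmetric]
    by (intro sum_nonneg mult_nonneg_nonneg) (auto intro: pdist_nonneg f \<pi>t \<mu>)
  have "(\<Sum>x'\<in>UNIV. mf_flow f \<pi> \<mu>0 (Suc t) x')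
      = (\<Sum>x'\<in>UNIV. \<Sum>x\<in>UNIV. \<Sum>u\<in>UNIV. f t x u \<mu> x' * (\<pi> t x u * \<mu> x))"
    by (simp add: \<mu>_def mult.assoc)
  also have "\<dots> = (\<Sum>x\<in>UNIV. \<Sum>u\<in>UNIV. \<Sum>x'\<in>UNIV. f t x u \<mu> x' * (\<pi> t x u * \<mu> x))"
    by (subst sum.swap) (intro sum.cong refl sum.swap)
  also have "\<dots> = (\<Sum>x\<in>UNIV. \<Sum>u\<in>UNIV. (\<Sum>x'\<in>UNIV. f t x u \<mu> x') * (\<pi> t x u * \<mu> x))"
    by (simp add: sum_distrib_right)
  also have "\<dots> = (\<Sum>x\<in>UNIV. (\<Sum>u\<in>UNIV. \<pi> t x u) * \<mu> x)"
    using f by (simp add: pdist_sum sum_distrib_right)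
  also have "\<dots> = 1"
    using \<pi>t \<mu> by (simp add: pdist_sum)
  finally show ?case
    using nonneg by (simp add: pdist_def)
qed

lemma f_tendsto:
  assumes t: "t < T" and M: "\<And>m. M m \<in> pdist" and \<mu>: "\<mu> \<in> pdist"
    and lim: "\<And>a. (\<lambda>m. M m a) \<longlonglongrightarrow> \<mu> a"
  shows "(\<lambda>m. f t x u (M m) x') \<longlonglongrightarrow> f t x u \<mu> x'"
proof (rule tendsto_by_dist_bound)
  show "\<bar>f t x u (M m) x' - f t x u \<mu> x'\<bar> \<le> Lf * dTV (M m) \<mu>" for m
  proof -
    have "\<bar>f t x u (M m) x' - f t x u \<mu> x'\<bar> \<le> (\<Sum>y\<in>UNIV. \<bar>f t x u (M m) y - f t x u \<mu> y\<bar>)"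
      by (rule member_le_sum) auto
    also have "\<dots> \<le> Lf * dTV (M m) \<mu>"
      by (rule f_Lip[OF t M \<mu>])
    finally show ?thesis .
  qed
  show "(\<lambda>m. Lf * dTV (M m) \<mu>) \<longlonglongrightarrow> 0"
    using tendsto_mult_right_zero[OF dTV_tendsto_0[of M \<mu>, OF lim]] by simp
qed simp

lemma r_tendsto:
  assumes t: "t < T" and M: "\<And>m. M m \<in> pdist" and \<mu>: "\<mu> \<in> pdist"
    and lim: "\<And>a. (\<lambda>m. M m a) \<longlonglongrightarrow> \<mu> a"
  shows "(\<lambda>m. r t x u (M m)) \<longlonglongrightarrow> r t x u \<mu>"
proof (rule tendsto_by_dist_bound)
  show "\<bar>r t x u (M m) - r t x u \<mu>\<bar> \<le> Lr * dTV (M m) \<mu>" for m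
    by (rule r_Lip[OF t M \<mu>])
  show "(\<lambda>m. Lr * dTV (M m) \<mu>) \<longlonglongrightarrow> 0"
    using tendsto_mult_right_zero[OF dTV_tendsto_0[of M \<mu>, OF lim]] by simp
qed simp

lemma mf_flow_tendsto:
  assumes P: "\<And>m. policy T (P m)" and \<pi>: "policy T \<pi>"
    and lim: "\<And>t x u. t < T \<Longrightarrow> (\<lambda>m. P m t x u) \<longlonglongrightarrow> \<pi> t x u"
    and \<mu>0: "\<mu>0 \<in> pdist"
  shows "t \<le> T \<Longrightarrow> (\<lambda>m. mf_flow f (P m) \<mu>0 t x) \<longlonglongrightarrow> mf_flow f \<pi> \<mu>0 t x"
proof (induction t arbitrary: x)
  case 0
  then show ?case by simp
next
  case (Suc t)
  then have t: "t < T" by simp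
  have flow_lim: "(\<lambda>m. mf_flow f (P m) \<mu>0 t a) \<longlonglongrightarrow> mf_flow f \<pi> \<mu>0 t a" for a
    using Suc t by simp
  have "(\<lambda>m. f t x u (mf_flow f (P m) \<mu>0 t) x') \<longlonglongrightarrow> f t x u (mf_flow f \<pi> \<mu>0 t) x'" for x u x'
    using t by (intro f_tendsto flow_lim mf_flow_pdist[OF P \<mu>0] mf_flow_pdist[OF \<pi> \<mu>0]) auto
  then show ?case
    unfolding mf_flow.simps by (intro tendsto_intros flow_lim lim[OF t])
qed

lemma Qk_tendsto:
  assumes P: "\<And>m. policy T (P m)" and \<pi>: "policy T \<pi>"
    and lim: "\<And>t x u. t < T \<Longrightarrow> (\<lambda>m. P m t x u) \<longlonglongrightarrow> \<pi> t x u"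
    and M: "\<And>m s. s \<le> T \<Longrightarrow> M m s \<in> pdist" and \<mu>: "\<And>s. s \<le> T \<Longrightarrow> \<mu> s \<in> pdist"
    and M_lim: "\<And>s a. s \<le> T \<Longrightarrow> (\<lambda>m. M m s a) \<longlonglongrightarrow> \<mu> s a"
  shows "t + j < T \<Longrightarrow> (\<lambda>m. Qk f r (P m) (M m) t j x u) \<longlonglongrightarrow> Qk f r \<pi> \<mu> t j x u"
proof (induction j arbitrary: t x u)
  case 0
  then show ?case
    using M \<mu> M_lim by (simp add: r_tendsto)
next
  case (Suc j)
  then have t: "t < T" and "Suc t < T" "Suc t + j < T" by simp_all
  have "(\<lambda>m. r t x u (M m t)) \<longlonglongrightarrow> r t x u (\<mu> t)"
    "(\<lambda>m. f t x u (M m t) x') \<longlonglongrightarrow> f t x u (\<mu> t) x'" for x'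
    using t M \<mu> M_lim by (simp_all add: r_tendsto f_tendsto)
  then show ?case
    unfolding Qk.simps by (intro tendsto_intros lim Suc.IH \<open>Suc t < T\<close> \<open>Suc t + j < T\<close>)
qed

end

section \<open>Existence of an equilibrium\<close>

locale rqe_game = risk_averse_qr K w \<tau> \<alpha> \<nu> + lipschitz_mean_field T f r Lf Lr
  for K w \<tau> \<alpha> and \<nu> :: "('u::finite \<Rightarrow> real) \<Rightarrow> real" and T
    and f :: "nat \<Rightarrow> 'x::finite \<Rightarrow> 'u \<Rightarrow> ('x \<Rightarrow> real) \<Rightarrow> 'x \<Rightarrow> real" and r Lf Lr +
  fixes \<mu>0 :: "nat \<Rightarrow> 'x \<Rightarrow> real"
  assumes mu0: "\<And>k. k < K \<Longrightarrow> \<mu>0 k \<in> pdist"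
begin

lemma rqe_cost_eq_qr_cost:
  "rqe_cost T f r K w \<tau> \<alpha> \<nu> t x \<pi> S = qr_cost (\<lambda>k. Qfun T f r \<pi> (S k) t x) (\<pi> t x)"
  by (simp add: rqe_cost_def qr_cost_def exp_moment_def)

definition best_response :: "(nat \<Rightarrow> 'x \<Rightarrow> 'u \<Rightarrow> real) \<Rightarrow> nat \<Rightarrow> 'x \<Rightarrow> 'u \<Rightarrow> real" where
  "best_response \<pi> t x = quantal_response (\<lambda>k. Qfun T f r \<pi> (B_prop f K \<mu>0 \<pi> k) t x)"

lemma best_response_tendsto:
  assumes P: "\<And>m. policy T (P m)" and \<pi>: "policy T \<pi>"
    and lim: "\<And>t x u. t < T \<Longrightarrow> (\<lambda>m. P m t x u) \<longlonglongrightarrow> \<pi> t x u"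
    and t: "t < T"
  shows "(\<lambda>m. best_response (P m) t x u) \<longlonglongrightarrow> best_response \<pi> t x u"
  unfolding best_response_def
proof (rule quantal_response_tendsto)
  fix k u' assume k: "k < K"
  have "(\<lambda>m. Qk f r (P m) (mf_flow f (P m) (\<mu>0 k)) t (T - 1 - t) x u')
      \<longlonglongrightarrow> Qk f r \<pi> (mf_flow f \<pi> (\<mu>0 k)) t (T - 1 - t) x u'"
    using t by (intro Qk_tendsto P \<pi> lim mf_flow_pdist mf_flow_tendsto mu0[OF k]) auto
  then show "(\<lambda>m. Qfun T f r (P m) (B_prop f K \<mu>0 (P m) k) t x u')
      \<longlonglongrightarrow> Qfun T f r \<pi> (B_prop f K \<mu>0 \<pi> k) t x u'"
    using k by (simp add: Qfun_def B_prop_def)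
qed

lemma best_response_fixed_point_in_B_opt:
  assumes \<pi>: "policy T \<pi>" and fixed: "\<And>t x. t < T \<Longrightarrow> best_response \<pi> t x = \<pi> t x"
  shows "\<pi> \<in> B_opt T f r K w \<tau> \<alpha> \<nu> (B_prop f K \<mu>0 \<pi>)"
  unfolding B_opt_def
proof (intro CollectI conjI \<pi> allI impI)
  fix t x d assume t: "t < T" and d: "decision_rule (d :: 'x \<Rightarrow> 'u \<Rightarrow> real)"
  define S where "S = B_prop f K \<mu>0 \<pi>"
  define c where "c = (\<lambda>k. Qfun T f r \<pi> (S k) t x)"
  have "(\<lambda>k. Qfun T f r (\<pi>(t := d)) (S k) t x) = c"
    unfolding c_def Qfun_def by (intro ext Qk_cong_future) simp
  then have "rqe_cost T f r K w \<tau> \<alpha> \<nu> t x (\<pi>(t := d)) S = qr_cost c (d x)"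
    by (simp add: rqe_cost_eq_qr_cost)
  moreover have "rqe_cost T f r K w \<tau> \<alpha> \<nu> t x \<pi> S = qr_cost c (quantal_response c)"
    using fixed[OF t, of x] by (simp add: rqe_cost_eq_qr_cost c_def best_response_def S_def)
  moreover have "qr_cost c (quantal_response c) \<le> qr_cost c (d x)"
    using d by (intro quantal_response_minimal) (simp add: decision_rule_def)
  ultimately show "rqe_cost T f r K w \<tau> \<alpha> \<nu> t x \<pi> S \<le> rqe_cost T f r K w \<tau> \<alpha> \<nu> t x (\<pi>(t := d)) S"
    by simp
qed

lemma best_response_fixed_point:
  "\<exists>\<pi>. policy T \<pi> \<and> (\<forall>t<T. \<forall>x. best_response \<pi> t x = \<pi> t x)"
proof -
  define I where "I = {..<T} \<times> (UNIV :: 'x set) \<times> (UNIV :: 'u set)"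
  define pol :: "(nat \<times> 'x \<times> 'u \<Rightarrow> real) \<Rightarrow> nat \<Rightarrow> 'x \<Rightarrow> 'u \<Rightarrow> real" where
    "pol y t x = to_pdist (\<lambda>u. y (t, x, u))" for y t x
  define F where "F y = (\<lambda>(t, x, u). best_response (pol y) t x u)" for y
  have pol: "policy T (pol y)" if "y \<in> cube I" for y
    using that unfolding policy_def decision_rule_def pol_def
    by (auto intro!: to_pdist_in_pdist simp: cube_def I_def)
  have "\<exists>z\<in>cube I. \<forall>i\<in>I. F z i = z i"
  proof (rule brouwer_cube)
    show "finite I" by (simp add: I_def)
    show "F y \<in> cube I" if "y \<in> cube I" for y
      using quantal_response_in_pdist
      by (auto simp: cube_def F_def best_response_def intro: pdist_nonneg pdist_le_1)
    show "(\<lambda>k. F (Y k) i) \<longlonglongrightarrow> F z i"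
      if Y: "\<And>k. Y k \<in> cube I" and z: "z \<in> cube I"
        and lim: "\<And>j. j \<in> I \<Longrightarrow> (\<lambda>k. Y k j) \<longlonglongrightarrow> z j" and i: "i \<in> I" for Y z i
    proof -
      obtain t x u where i_eq: "i = (t, x, u)" and t: "t < T"
        using i by (auto simp: I_def)
      have "(\<lambda>k. pol (Y k) t' x' u') \<longlonglongrightarrow> pol z t' x' u'" if "t' < T" for t' x' u'
        unfolding pol_def using that by (intro to_pdist_tendsto lim) (simp add: I_def)
      then show ?thesis
        unfolding i_eq F_def using Y z t by (simp add: best_response_tendsto pol)
    qed
  qed
  then obtain z where z: "z \<in> cube I" and fixed: "\<And>i. i \<in> I \<Longrightarrow> F z i = z i"
    by blast
  have "best_response (pol z) t x = pol z t x" if t: "t < T" for t x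
  proof -
    have "best_response (pol z) t x = (\<lambda>u. z (t, x, u))"
      using fixed t by (auto simp: F_def I_def)
    then show ?thesis
      unfolding pol_def by (metis to_pdist_id best_response_def quantal_response_in_pdist)
  qed
  then show ?thesis
    using pol[OF z] by blast
qed

end

theorem proposition1:
  fixes T K :: nat
    and f :: "nat \<Rightarrow> 'x::finite \<Rightarrow> 'u::finite \<Rightarrow> ('x \<Rightarrow> real) \<Rightarrow> 'x \<Rightarrow> real"
    and r :: "nat \<Rightarrow> 'x \<Rightarrow> 'u \<Rightarrow> ('x \<Rightarrow> real) \<Rightarrow> real"
    and Rmax Lf Lr \<tau> \<alpha> :: real
    and \<mu>0 :: "nat \<Rightarrow> 'x \<Rightarrow> real"
    and w :: "nat \<Rightarrow> real"
    and \<nu> :: "('u \<Rightarrow> real) \<Rightarrow> real"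
  assumes T: "T \<ge> 1"
    and f_dist: "\<And>t x u \<mu>. t < T \<Longrightarrow> \<mu> \<in> pdist \<Longrightarrow> f t x u \<mu> \<in> pdist"
    and r_bound: "\<And>t x u \<mu>. t < T \<Longrightarrow> \<mu> \<in> pdist \<Longrightarrow> \<bar>r t x u \<mu>\<bar> \<le> Rmax"
    and Lf: "Lf > 0" and Lr: "Lr > 0"
    and f_Lip: "\<And>t x u \<mu> \<mu>'. t < T \<Longrightarrow> \<mu> \<in> pdist \<Longrightarrow> \<mu>' \<in> pdist \<Longrightarrow>
        (\<Sum>x'\<in>UNIV. \<bar>f t x u \<mu> x' - f t x u \<mu>' x'\<bar>) \<le> Lf * dTV \<mu> \<mu>'"
    and r_Lip: "\<And>t x u \<mu> \<mu>'. t < T \<Longrightarrow> \<mu> \<in> pdist \<Longrightarrow> \<mu>' \<in> pdist \<Longrightarrow>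
        \<bar>r t x u \<mu> - r t x u \<mu>'\<bar> \<le> Lr * dTV \<mu> \<mu>'"
    and K: "K \<ge> 1"
    and mu0: "\<And>k. k < K \<Longrightarrow> \<mu>0 k \<in> pdist"
    and mu0_inj: "inj_on \<mu>0 {..<K}"
    and w_nonneg: "\<And>k. k < K \<Longrightarrow> w k \<ge> 0"
    and w_sum: "(\<Sum>k<K. w k) = 1"
    and tau: "\<tau> > 0" and alpha: "\<alpha> > 0"
    and nu_strict_convex: "\<And>p q a. p \<in> pdist \<Longrightarrow> q \<in> pdist \<Longrightarrow> p \<noteq> q \<Longrightarrow> 0 < a \<Longrightarrow> a < 1 \<Longrightarrow>
        \<nu> (\<lambda>u. a * p u + (1 - a) * q u) < a * \<nu> p + (1 - a) * \<nu> q"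
    and nu_cont: "continuous_on pdist \<nu>"
  shows "\<exists>\<pi> S. \<pi> \<in> B_opt T f r K w \<tau> \<alpha> \<nu> S \<and> B_prop f K \<mu>0 \<pi> = S"
proof -
  interpret rqe_game K w \<tau> \<alpha> \<nu> T f r Lf Lr \<mu>0
    by unfold_locales (fact w_nonneg w_sum tau alpha nu_strict_convex nu_cont f_dist f_Lip r_Lip mu0)+
  obtain \<pi> where "policy T \<pi>" and "\<And>t x. t < T \<Longrightarrow> best_response \<pi> t x = \<pi> t x"
    using best_response_fixed_point by blast
  then show ?thesis
    using best_response_fixed_point_in_B_opt by blast
qed

end
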